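(* Let $G$ be a graph with a cycle double cover $\mathcal D$, and let $G^+$ be a weak 9-enlargement of $G$, obtained from an edge $xy$ and a vertex $u$ (with no disk containing both $u$ and the edge $xy$) by subdividing $xy$ and joining the new vertex to $u$. If $G\setminus\{u,x,y\}$ is connected, then $G^+$ has a minor isomorphic to an $i$-enlargement of $G$ with respect to $\mathcal D$ for some $i\in\{1,3,9\}$.
   Context: Graphs are finite and simple. A cycle double cover of $G$ is a set $\mathcal D$ of distinct cycles (disks) such that each edge lies in exactly two disks. Two elements (vertices or edges) are confluent if some disk contains both. Splitting: for a vertex $v$ of degree $\ge4$ and a partition $(N_1,N_2)$ of its neighbours with $|N_1|,|N_2|\ge2$, replace $v$ by adjacent new vertices $v_1,v_2$ with $v_i$ adjacent to $N_i$. The split is conforming (w.r.t. $\mathcal D$) if (S1) among the disks containing $v$ exactly two, $D_1,D_2$, have their two neighbours of $v$ one in $N_1$ and one in $N_2$, and (S2) $D_1\cap D_2=\{v\}$; otherwise non-conforming. Enlargements: a 1-enlargement adds an edge between two non-confluent vertices; a 3-enlargement performs a non-conforming split of a vertex; a 9-enlargement, for a vertex $u$ and an edge $xy$ such that no disk contains both $u$ and the edge $xy$, $u$ is confluent with $x$ and with $y$, $u$ is adjacent to neither $x$ nor $y$, and $G\setminus\{u,x,y\}$ is connected, subdivides $xy$ by a new vertex and joins it to $u$. A weak 9-enlargement is obtained in the same way from any edge $xy$ and vertex $u$ such that no disk contains both $u$ and the edge $xy$. *)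

theory Defs
  imports Main
begin

definition wf_graph :: "'a set \<Rightarrow> 'a set set \<Rightarrow> bool" where
  "wf_graph V E \<longleftrightarrow> finite V \<and> (\<forall>e\<in>E. \<exists>a b. a \<noteq> b \<and> a \<in> V \<and> b \<in> V \<and> e = {a, b})"

definition nbrs :: "'a set set \<Rightarrow> 'a \<Rightarrow> 'a set" where
  "nbrs E v = {w. {v, w} \<in> E}"

text \<open>Connectedness of the subgraph induced on S (the empty graph counts as connected).\<close>
definition connected_on :: "'a set \<Rightarrow> 'a set set \<Rightarrow> bool" where
  "connected_on S E \<longleftrightarrow>
     (\<forall>a\<in>S. \<forall>b\<in>S. (a, b) \<in> {(p, q). p \<in> S \<and> q \<in> S \<and> {p, q} \<in> E}\<^sup>*)"

definition verts :: "'a set set \<Rightarrow> 'a set" where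
  "verts C = \<Union>C"

definition is_cycle :: "'a set \<Rightarrow> 'a set set \<Rightarrow> 'a set set \<Rightarrow> bool" where
  "is_cycle V E C \<longleftrightarrow> C \<noteq> {} \<and> C \<subseteq> E \<and> connected_on (verts C) C
     \<and> (\<forall>v\<in>verts C. card (nbrs C v) = 2)"

definition cdc :: "'a set \<Rightarrow> 'a set set \<Rightarrow> 'a set set set \<Rightarrow> bool" where
  "cdc V E D \<longleftrightarrow> finite D \<and> (\<forall>C\<in>D. is_cycle V E C)
     \<and> (\<forall>e\<in>E. card {C\<in>D. e \<in> C} = 2)"

definition confluent :: "'a set set set \<Rightarrow> 'a \<Rightarrow> 'a \<Rightarrow> bool" where
  "confluent D a b \<longleftrightarrow> (\<exists>C\<in>D. a \<in> verts C \<and> b \<in> verts C)"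

definition disk_contains_vertex_edge :: "'a set set set \<Rightarrow> 'a \<Rightarrow> 'a set \<Rightarrow> bool" where
  "disk_contains_vertex_edge D u e \<longleftrightarrow> (\<exists>C\<in>D. u \<in> verts C \<and> e \<in> C)"

definition is_split :: "'a set \<Rightarrow> 'a set set \<Rightarrow> 'a \<Rightarrow> 'a set \<Rightarrow> 'a set \<Rightarrow> 'a \<Rightarrow> 'a
    \<Rightarrow> 'a set \<Rightarrow> 'a set set \<Rightarrow> bool" where
  "is_split V E v N1 N2 v1 v2 V' E' \<longleftrightarrow>
     v \<in> V \<and> card (nbrs E v) \<ge> 4 \<and>
     N1 \<union> N2 = nbrs E v \<and> N1 \<inter> N2 = {} \<and> card N1 \<ge> 2 \<and> card N2 \<ge> 2 \<and>
     v1 \<noteq> v2 \<and> v1 \<notin> V - {v} \<and> v2 \<notin> V - {v} \<and>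
     V' = (V - {v}) \<union> {v1, v2} \<and>
     E' = {e\<in>E. v \<notin> e} \<union> {{v1, v2}} \<union> {{v1, w} | w. w \<in> N1} \<union> {{v2, w} | w. w \<in> N2}"

definition crosses :: "'a \<Rightarrow> 'a set \<Rightarrow> 'a set \<Rightarrow> 'a set set \<Rightarrow> bool" where
  "crosses v N1 N2 C \<longleftrightarrow> v \<in> verts C \<and> (\<exists>a\<in>N1. \<exists>b\<in>N2. {v, a} \<in> C \<and> {v, b} \<in> C)"

definition conforming :: "'a set set set \<Rightarrow> 'a \<Rightarrow> 'a set \<Rightarrow> 'a set \<Rightarrow> bool" where
  "conforming D v N1 N2 \<longleftrightarrow>
     (\<exists>D1 D2. D1 \<noteq> D2 \<and> {C\<in>D. crosses v N1 N2 C} = {D1, D2}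
        \<and> verts D1 \<inter> verts D2 = {v})"

definition one_enlargement :: "'a set \<Rightarrow> 'a set set \<Rightarrow> 'a set set set
    \<Rightarrow> 'a set \<Rightarrow> 'a set set \<Rightarrow> bool" where
  "one_enlargement V E D V' E' \<longleftrightarrow>
     (\<exists>a b. a \<in> V \<and> b \<in> V \<and> a \<noteq> b \<and> \<not> confluent D a b \<and> V' = V \<and> E' = insert {a, b} E)"

definition three_enlargement :: "'a set \<Rightarrow> 'a set set \<Rightarrow> 'a set set set
    \<Rightarrow> 'a set \<Rightarrow> 'a set set \<Rightarrow> bool" where
  "three_enlargement V E D V' E' \<longleftrightarrow>
     (\<exists>v N1 N2 v1 v2. is_split V E v N1 N2 v1 v2 V' E' \<and> \<not> conforming D v N1 N2)"

definition subdiv_join :: "'a set \<Rightarrow> 'a set set \<Rightarrow> 'a \<Rightarrow> 'a \<Rightarrow> 'a \<Rightarrow> 'a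
    \<Rightarrow> 'a set \<Rightarrow> 'a set set \<Rightarrow> bool" where
  "subdiv_join V E u x y w V' E' \<longleftrightarrow>
     u \<in> V \<and> {x, y} \<in> E \<and> w \<notin> V \<and>
     V' = insert w V \<and> E' = (E - {{x, y}}) \<union> {{x, w}, {w, y}, {w, u}}"

definition weak_nine_enlargement :: "'a set \<Rightarrow> 'a set set \<Rightarrow> 'a set set set
    \<Rightarrow> 'a \<Rightarrow> 'a \<Rightarrow> 'a \<Rightarrow> 'a \<Rightarrow> 'a set \<Rightarrow> 'a set set \<Rightarrow> bool" where
  "weak_nine_enlargement V E D u x y w V' E' \<longleftrightarrow>
     subdiv_join V E u x y w V' E' \<and> \<not> disk_contains_vertex_edge D u {x, y}"

definition nine_enlargement :: "'a set \<Rightarrow> 'a set set \<Rightarrow> 'a set set set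
    \<Rightarrow> 'a set \<Rightarrow> 'a set set \<Rightarrow> bool" where
  "nine_enlargement V E D V' E' \<longleftrightarrow>
     (\<exists>u x y w. subdiv_join V E u x y w V' E' \<and> \<not> disk_contains_vertex_edge D u {x, y}
        \<and> confluent D u x \<and> confluent D u y
        \<and> {u, x} \<notin> E \<and> {u, y} \<notin> E
        \<and> connected_on (V - {u, x, y}) E)"

definition is_minor :: "'b set \<Rightarrow> 'b set set \<Rightarrow> 'a set \<Rightarrow> 'a set set \<Rightarrow> bool" where
  "is_minor VH EH VG EG \<longleftrightarrow>
     (\<exists>\<phi> :: 'b \<Rightarrow> 'a set.
        (\<forall>h\<in>VH. \<phi> h \<noteq> {} \<and> \<phi> h \<subseteq> VG \<and> connected_on (\<phi> h) EG) \<and>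
        (\<forall>h\<in>VH. \<forall>h'\<in>VH. h \<noteq> h' \<longrightarrow> \<phi> h \<inter> \<phi> h' = {}) \<and>
        (\<forall>e\<in>EH. \<exists>a b. e = {a, b} \<and> (\<exists>p\<in>\<phi> a. \<exists>q\<in>\<phi> b. {p, q} \<in> EG)))"

end

theory Submission
  imports Defs
begin

(* We show that G+ contains an i-enlargement of G as a
   minor, i in {1,3,9}, by distinguishing how u relates to x and y:
   - u is not confluent with x (or y): contracting wx turns G+ into G + ux,
     a 1-enlargement;
   - u is adjacent to x (or y): splitting x into x (keeping the neighbours
     other than y,u) and w (taking y,u) gives a subgraph of G+; the two disks
     through xy and the two disks through xu are four distinct disks crossing
     this split, so it is non-conforming, i.e. a 3-enlargement;
   - otherwise G+ satisfies every condition of a 9-enlargement itself. *)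

section \<open>Graphs and minors\<close>

lemma wf_graph_edge:
  assumes "wf_graph V E" "{a, b} \<in> E"
  shows "a \<in> V" "b \<in> V" "a \<noteq> b"
proof -
  obtain p q where pq: "p \<noteq> q" "p \<in> V" "q \<in> V" "{a, b} = {p, q}"
    using assms unfolding wf_graph_def by meson
  then have "(a = p \<and> b = q) \<or> (a = q \<and> b = p)" by (simp add: doubleton_eq_iff)
  then show "a \<in> V" "b \<in> V" "a \<noteq> b" using pq by auto
qed

lemma wf_graph_edge_doubleton:
  assumes "wf_graph V E" "e \<in> E"
  shows "\<exists>a b. e = {a, b}"
  using assms unfolding wf_graph_def by blast

lemma finite_nbrs:
  assumes "wf_graph V E"
  shows "finite (nbrs E v)"
proof -
  have "nbrs E v \<subseteq> V" using wf_graph_edge(2)[OF assms] unfolding nbrs_def by blast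
  moreover have "finite V" using assms unfolding wf_graph_def by blast
  ultimately show ?thesis by (rule finite_subset)
qed

text \<open>A subgraph is a minor: take singleton branch sets.\<close>
lemma subgraph_is_minor:
  assumes "VH \<subseteq> VG" "EH \<subseteq> EG" "\<forall>e\<in>EH. \<exists>a b. e = {a, b}"
  shows "is_minor VH EH VG EG"
  unfolding is_minor_def
proof (rule exI[of _ "\<lambda>h. {h}"], intro conjI ballI impI)
  fix h assume "h \<in> VH"
  then show "{h} \<noteq> {}" "{h} \<subseteq> VG" "connected_on {h} EG"
    using assms by (auto simp: connected_on_def)
next
  fix h h' assume "h \<noteq> h'" then show "{h} \<inter> {h'} = {}" by simp
next
  fix e assume e: "e \<in> EH"
  then obtain a b where "e = {a, b}" using assms(3) by blast
  moreover have "{a, b} \<in> EG" using e calculation assms(2) by blast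
  ultimately show "\<exists>a b. e = {a, b} \<and> (\<exists>p\<in>{a}. \<exists>q\<in>{b}. {p, q} \<in> EG)" by blast
qed

lemma subdiv_join_swap:
  assumes "subdiv_join V E u x y w V' E'"
  shows "subdiv_join V E u y x w V' E'"
proof -
  have sym: "{y, x} = {x, y}" "{y, w} = {w, y}" "{w, x} = {x, w}" by auto
  have "{{y, w}, {w, x}, {w, u}} = {{x, w}, {w, y}, {w, u}}" unfolding sym by auto
  then show ?thesis using assms unfolding subdiv_join_def sym(1) by simp
qed

lemma subdiv_join_edge_doubleton:
  assumes "wf_graph V E" "subdiv_join V E u x y w V' E'" "e \<in> E'"
  shows "\<exists>a b. e = {a, b}"
proof -
  have "e \<in> E \<or> e \<in> {{x, w}, {w, y}, {w, u}}" using assms(2,3) unfolding subdiv_join_def by blast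
  then show ?thesis using wf_graph_edge_doubleton[OF assms(1)] by blast
qed

text \<open>Contracting the edge xw of the subdivided graph yields G together with the
  edge ux: the branch set of x is {x, w}, all other branch sets are singletons.\<close>
lemma subdiv_join_contract:
  assumes sj: "subdiv_join V E u x y w V' E'" and wf: "wf_graph V E" and ux: "u \<noteq> x"
  shows "is_minor V (insert {u, x} E) V' E'"
proof -
  have xyE: "{x, y} \<in> E" and wV: "w \<notin> V" and V': "V' = insert w V"
    and E': "E' = (E - {{x, y}}) \<union> {{x, w}, {w, y}, {w, u}}"
    using sj unfolding subdiv_join_def by auto
  have xV: "x \<in> V" and xy: "x \<noteq> y" using wf_graph_edge[OF wf xyE] by simp_all
  define B where "B = (\<lambda>h. if h = x then {x, w} else {h})"
  have branch: "B h \<noteq> {} \<and> B h \<subseteq> V' \<and> connected_on (B h) E'" if "h \<in> V" for h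
  proof (cases "h = x")
    case True
    have "{x, w} \<in> E'" "{w, x} \<in> E'" using E' by (simp_all add: insert_commute)
    then have "connected_on {x, w} E'"
      unfolding connected_on_def by (auto intro: r_into_rtrancl)
    then show ?thesis using True xV V' unfolding B_def by simp
  next
    case False
    then show ?thesis using that V' unfolding B_def connected_on_def by auto
  qed
  have disjoint: "B h \<inter> B h' = {}" if "h \<in> V" "h' \<in> V" "h \<noteq> h'" for h h'
    using that wV unfolding B_def by auto
  have edges: "\<exists>a b. e = {a, b} \<and> (\<exists>p\<in>B a. \<exists>q\<in>B b. {p, q} \<in> E')"
    if e: "e \<in> insert {u, x} E" for e
  proof -
    consider (ux_edge) "e = {u, x}" | (xy_edge) "e = {x, y}" | (old) "e \<in> E" "e \<noteq> {x, y}"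
      using e by blast
    then show ?thesis
    proof cases
      case ux_edge
      have "u \<in> B u" "w \<in> B x" "{u, w} \<in> E'"
        using ux E' unfolding B_def by (auto simp: insert_commute)
      then show ?thesis using ux_edge by blast
    next
      case xy_edge
      have "w \<in> B x" "y \<in> B y" "{w, y} \<in> E'"
        using xy E' unfolding B_def by auto
      then show ?thesis using xy_edge by blast
    next
      case old
      then obtain a b where ab: "e = {a, b}" using wf_graph_edge_doubleton[OF wf] by blast
      have "a \<in> B a" "b \<in> B b" unfolding B_def by auto
      moreover have "{a, b} \<in> E'" using old ab E' by blast
      ultimately show ?thesis using ab by blast
    qed
  qed
  show ?thesis
    unfolding is_minor_def by (intro exI[of _ B] conjI ballI impI) (use branch disjoint edges in auto)
qed

section \<open>Cycles, double covers and crossing disks\<close>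

lemma edge_in_verts:
  assumes "{a, b} \<in> C"
  shows "a \<in> verts C" "b \<in> verts C"
  using assms unfolding verts_def by blast+

lemma cycle_other_neighbour:
  assumes cyc: "is_cycle V E C" and xa: "{x, a} \<in> C"
  shows "\<exists>z. z \<noteq> a \<and> {x, z} \<in> C"
proof -
  have "card (nbrs C x) = 2"
    using cyc edge_in_verts(1)[OF xa] unfolding is_cycle_def by blast
  then obtain p q where pq: "nbrs C x = {p, q}" "p \<noteq> q" by (auto simp: card_2_iff)
  then have "{x, p} \<in> C" "{x, q} \<in> C" unfolding nbrs_def by auto
  then show ?thesis using pq(2) by (cases "p = a") auto
qed

lemma cdc_edge_disks:
  assumes "cdc V E D" "e \<in> E"
  shows "card {C\<in>D. e \<in> C} = 2"
  using assms unfolding cdc_def by auto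

lemma cdc_edge_has_disk:
  assumes "cdc V E D" "e \<in> E"
  obtains C where "C \<in> D" "e \<in> C"
proof -
  have "{C\<in>D. e \<in> C} \<noteq> {}" using cdc_edge_disks[OF assms] by (metis card.empty zero_neq_numeral)
  then show ?thesis using that by blast
qed

text \<open>A vertex lying on no disk through the edge xy is distinct from x and y,
  since a disk through xy exists and contains both ends.\<close>
lemma avoiding_vertex_distinct:
  assumes cd: "cdc V E D" and xy: "{x, y} \<in> E"
    and nd: "\<not> disk_contains_vertex_edge D u {x, y}"
  shows "u \<noteq> x" "u \<noteq> y"
proof -
  obtain C where C: "C \<in> D" "{x, y} \<in> C" using cdc_edge_has_disk[OF cd xy] by blast
  have "x \<in> verts C" "y \<in> verts C" using edge_in_verts[OF C(2)] by simp_all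
  then show "u \<noteq> x" "u \<noteq> y"
    using nd C unfolding disk_contains_vertex_edge_def by auto
qed

text \<open>A cycle that meets the neighbour set N2 of x in exactly one edge at x leaves x
  through a neighbour outside N2, hence crosses the partition (nbrs E x - N2, N2).\<close>
lemma cycle_crosses_at_unique_edge:
  assumes cyc: "is_cycle V E C" and a: "a \<in> N2" "{x, a} \<in> C"
    and unique: "\<forall>b\<in>N2. {x, b} \<in> C \<longrightarrow> b = a"
  shows "crosses x (nbrs E x - N2) N2 C"
proof -
  obtain z where z: "z \<noteq> a" "{x, z} \<in> C" using cycle_other_neighbour[OF cyc a(2)] by blast
  have "{x, z} \<in> E" using z(2) cyc unfolding is_cycle_def by blast
  then have "z \<in> nbrs E x - N2" using z unique unfolding nbrs_def by auto
  then show ?thesis using a z edge_in_verts(1)[OF a(2)] unfolding crosses_def by blast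
qed

text \<open>A conforming split is crossed by exactly two disks; so three crossing disks
  make a split non-conforming.\<close>
lemma three_crossing_disks_nonconforming:
  assumes "A \<subseteq> {C\<in>D. crosses v N1 N2 C}" "card A \<ge> 3"
  shows "\<not> conforming D v N1 N2"
proof
  assume "conforming D v N1 N2"
  then obtain D1 D2 where "{C\<in>D. crosses v N1 N2 C} = {D1, D2}"
    unfolding conforming_def by blast
  then have "card A \<le> card {D1, D2}" using assms(1) by (intro card_mono) auto
  also have "\<dots> \<le> 2" by (simp add: card_insert_le_m1)
  finally show False using assms(2) by simp
qed

text \<open>Three disks crossing a split cannot all leave v through the same neighbour in N1,
  since every edge lies in only two disks; hence N1 has at least two elements.\<close>
lemma three_crossing_disks_spread:
  assumes cd: "cdc V E D" and A: "A \<subseteq> D" "card A \<ge> 3"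
    and cross: "\<forall>C\<in>A. crosses v N1 N2 C" and fin: "finite N1"
  shows "card N1 \<ge> 2"
proof (rule ccontr)
  assume small: "\<not> card N1 \<ge> 2"
  obtain C0 where "C0 \<in> A" using A(2) by fastforce
  then obtain z0 where z0: "z0 \<in> N1" "{v, z0} \<in> C0" "C0 \<in> D"
    using cross A(1) unfolding crosses_def by blast
  have N1: "N1 = {z0}" using small z0(1) fin card_le_Suc0_iff_eq[OF fin] by force
  have "{v, z0} \<in> E" using z0 cd unfolding cdc_def is_cycle_def by blast
  have "A \<subseteq> {C\<in>D. {v, z0} \<in> C}" using cross A(1) N1 unfolding crosses_def by blast
  then have "card A \<le> card {C\<in>D. {v, z0} \<in> C}"
    using cd unfolding cdc_def by (intro card_mono) auto
  then show False using cdc_edge_disks[OF cd \<open>{v, z0} \<in> E\<close>] A(2) by simp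
qed

section \<open>The splitting case\<close>

lemma four_disks_cross_split:
  assumes cd: "cdc V E D"
    and nd: "\<not> disk_contains_vertex_edge D u {x, y}"
    and xy: "{x, y} \<in> E" and xu: "{x, u} \<in> E"
  defines "A \<equiv> {C\<in>D. {x, y} \<in> C} \<union> {C\<in>D. {x, u} \<in> C}"
  shows "card A = 4" "A \<subseteq> {C\<in>D. crosses x (nbrs E x - {y, u}) {y, u} C}"
proof -
  have finD: "finite D" and cyc: "\<And>C. C \<in> D \<Longrightarrow> is_cycle V E C"
    using cd unfolding cdc_def by blast+
  have avoid: "u \<notin> verts C" if "C \<in> D" "{x, y} \<in> C" for C
    using nd that unfolding disk_contains_vertex_edge_def by blast
  have u_in: "u \<in> verts C" if "{x, u} \<in> C" for C
    using edge_in_verts(2)[OF that] .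
  have "{C\<in>D. {x, y} \<in> C} \<inter> {C\<in>D. {x, u} \<in> C} = {}" using avoid u_in by blast
  then show "card A = 4"
    unfolding A_def using finD cdc_edge_disks[OF cd xy] cdc_edge_disks[OF cd xu]
    by (simp add: card_Un_disjoint)
  show "A \<subseteq> {C\<in>D. crosses x (nbrs E x - {y, u}) {y, u} C}"
  proof
    fix C assume "C \<in> A"
    then consider "C \<in> D" "{x, y} \<in> C" | "C \<in> D" "{x, u} \<in> C" unfolding A_def by blast
    then show "C \<in> {C\<in>D. crosses x (nbrs E x - {y, u}) {y, u} C}"
    proof cases
      case 1
      have "\<forall>b\<in>{y, u}. {x, b} \<in> C \<longrightarrow> b = y" using avoid[OF 1] u_in by blast
      then show ?thesis using 1 cycle_crosses_at_unique_edge[OF cyc[OF 1(1)], of y] by simp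
    next
      case 2
      have "{x, y} \<notin> C" using avoid[OF 2(1)] u_in[OF 2(2)] by blast
      then have "\<forall>b\<in>{y, u}. {x, b} \<in> C \<longrightarrow> b = u" by blast
      then show ?thesis using 2 cycle_crosses_at_unique_edge[OF cyc[OF 2(1)], of u] by simp
    qed
  qed
qed

lemma subdiv_join_contains_split:
  assumes wf: "wf_graph V E" and cd: "cdc V E D"
    and sj: "subdiv_join V E u x y w V' E'"
    and nd: "\<not> disk_contains_vertex_edge D u {x, y}"
    and xu: "{x, u} \<in> E"
  shows "\<exists>VH EH. three_enlargement V E D VH EH \<and> is_minor VH EH V' E'"
proof -
  have xy: "{x, y} \<in> E" and wV: "w \<notin> V" and V': "V' = insert w V"
    and E': "E' = (E - {{x, y}}) \<union> {{x, w}, {w, y}, {w, u}}"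
    using sj unfolding subdiv_join_def by auto
  have xV: "x \<in> V" and x_ne_y: "x \<noteq> y" using wf_graph_edge[OF wf xy] by simp_all
  define N1 where "N1 = nbrs E x - {y, u}"
  define N2 where "N2 = {y, u}"
  define A where "A = {C\<in>D. {x, y} \<in> C} \<union> {C\<in>D. {x, u} \<in> C}"
  have A: "card A = 4" "A \<subseteq> {C\<in>D. crosses x N1 N2 C}"
    using four_disks_cross_split[OF cd nd xy xu] unfolding A_def N1_def N2_def by auto
  have nonconf: "\<not> conforming D x N1 N2"
    using three_crossing_disks_nonconforming[OF A(2)] A(1) by simp
  have finN1: "finite N1" using finite_nbrs[OF wf] unfolding N1_def by simp
  have cN1: "card N1 \<ge> 2"
    using three_crossing_disks_spread[OF cd _ _ _ finN1, of A] A by auto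
  have u_ne_y: "u \<noteq> y" using avoiding_vertex_distinct[OF cd xy nd] by simp
  have cN2: "card N2 = 2" unfolding N2_def using u_ne_y by simp
  have partition: "N1 \<union> N2 = nbrs E x" "N1 \<inter> N2 = {}"
    using xy xu unfolding N1_def N2_def nbrs_def by auto
  have "card (nbrs E x) = card N1 + card N2"
    using card_Un_disjoint[OF finN1 _ partition(2)] partition(1) unfolding N2_def by simp
  then have deg: "card (nbrs E x) \<ge> 4" using cN1 cN2 by simp
  define EH where "EH = {e\<in>E. x \<notin> e} \<union> {{x, w}} \<union> {{x, a} | a. a \<in> N1} \<union> {{w, a} | a. a \<in> N2}"
  have split: "is_split V E x N1 N2 x w V' EH"
    unfolding is_split_def using xV deg partition cN1 cN2 wV V' EH_def by auto
  have "EH \<subseteq> E'"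
  proof -
    have "{x, a} \<in> E'" if "a \<in> N1" for a
      using that x_ne_y E' unfolding N1_def nbrs_def by (auto simp: doubleton_eq_iff)
    then show ?thesis using E' unfolding EH_def N2_def by auto
  qed
  moreover have "\<forall>e\<in>EH. \<exists>a b. e = {a, b}"
    using wf_graph_edge_doubleton[OF wf] unfolding EH_def by blast
  ultimately have "is_minor V' EH V' E'" by (intro subgraph_is_minor) auto
  moreover have "three_enlargement V E D V' EH"
    unfolding three_enlargement_def using split nonconf by blast
  ultimately show ?thesis by blast
qed

theorem lemma6p1:
  fixes V :: "'a set" and E :: "'a set set" and D :: "'a set set set"
    and u x y w :: 'a and V' :: "'a set" and E' :: "'a set set"
  assumes "wf_graph V E"
    and "cdc V E D"
    and "weak_nine_enlargement V E D u x y w V' E'"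
    and "connected_on (V - {u, x, y}) E"
  shows "\<exists>VH EH. (one_enlargement V E D VH EH \<or> three_enlargement V E D VH EH
                   \<or> nine_enlargement V E D VH EH)
                 \<and> is_minor VH EH V' E'"
proof -
  note wf = assms(1) and cd = assms(2)
  have sj: "subdiv_join V E u x y w V' E'" and nd: "\<not> disk_contains_vertex_edge D u {x, y}"
    using assms(3) unfolding weak_nine_enlargement_def by auto
  have sj': "subdiv_join V E u y x w V' E'" using subdiv_join_swap[OF sj] .
  have nd': "\<not> disk_contains_vertex_edge D u {y, x}" using nd by (simp add: insert_commute)
  have uV: "u \<in> V" and xV: "x \<in> V" and yV: "y \<in> V"
    using sj wf_graph_edge[OF wf] unfolding subdiv_join_def by auto
  have "{x, y} \<in> E" using sj unfolding subdiv_join_def by blast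
  note distinct = avoiding_vertex_distinct[OF cd this nd]
  consider (far_x) "\<not> confluent D u x" | (far_y) "\<not> confluent D u y"
    | (adjacent_x) "{x, u} \<in> E" | (adjacent_y) "{y, u} \<in> E"
    | (nine) "confluent D u x" "confluent D u y" "{u, x} \<notin> E" "{u, y} \<notin> E"
    by (auto simp: insert_commute)
  then show ?thesis
  proof cases
    case far_x
    then have "one_enlargement V E D V (insert {u, x} E)"
      unfolding one_enlargement_def using uV xV distinct by blast
    then show ?thesis using subdiv_join_contract[OF sj wf distinct(1)] by blast
  next
    case far_y
    then have "one_enlargement V E D V (insert {u, y} E)"
      unfolding one_enlargement_def using uV yV distinct by blast
    then show ?thesis using subdiv_join_contract[OF sj' wf distinct(2)] by blast
  next
    case adjacent_x then show ?thesis using subdiv_join_contains_split[OF wf cd sj nd] by blast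
  next
    case adjacent_y then show ?thesis using subdiv_join_contains_split[OF wf cd sj' nd'] by blast
  next
    case nine
    then have "nine_enlargement V E D V' E'"
      unfolding nine_enlargement_def using sj nd assms(4) by blast
    moreover have "is_minor V' E' V' E'"
      using subdiv_join_edge_doubleton[OF wf sj] by (intro subgraph_is_minor) auto
    ultimately show ?thesis by blast
  qed
qed

end
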